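(* For $s \in J$ and $f \in Y$, the stochastic process $(V(s,t)f)_{t \in J(s)}$ is adapted to the augmented filtration \[ \mathcal{F}_t(s):=\sigma \left[x_{n \wedge N_s(t)}(s), T_{n \wedge N_s(t)}(s) : n \in \mathbb{N} \right] \vee \sigma(\mathbb{P}\text{-null sets}), \qquad t\in J(s), \] i.e. $V(s,t)f$ is $\mathcal F_t(s)$–Borel$(Y)$ measurable for every $t\in J(s)$.
   Context: $(Y,\|\cdot\|)$ is a real separable Banach space with Borel $\sigma$-algebra $\mathcal Y$; $J$ is $\mathbb{R}^+$ or $[0,T_\infty]$, $\Delta_J=\{(s,t)\in J^2:s\le t\}$, $J(s)=\{t\in J:t\ge s\}$. An inhomogeneous $Y$-semigroup is a map $\Gamma:\Delta_J\to\mathcal B(Y)$ with $\Gamma(t,t)=I$ and $\Gamma(s,r)\Gamma(r,t)=\Gamma(s,t)$ for $s\le r\le t$. Let $(\Omega,\mathcal F,\mathbb P)$ be a complete probability space, $X$ a finite set with $\sigma$-algebra $\mathcal X$ of all subsets, $(x_n)_{n\ge0}$ $X$-valued and $(\tau_n)_{n\ge1}$ $(0,\infty)$-valued random variables, $\tau_0=0$, $T_n=\sum_{k=0}^n\tau_k$, such that $(x_n,T_n)$ is a Markov renewal process: there is a semi-Markov kernel $Q$ with $\mathbb P[x_{n+1}=y,T_{n+1}-T_n\le t\mid x_k,T_k,k\le n]=Q(x_n,y,t)$ a.s. Let $N(t)=\sup\{n:T_n\le t\}$; $\Omega$ is replaced by the full-measure event $\{N(t)<\infty\ \forall t\in\mathbb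 Q\}$ (with restricted $\sigma$-algebra and probability). Set $x(t)=x_{N(t)}$, and for $s\le t$: $N_s(t)=N(t)-N(s)$, $T_0(s)=s$, $T_n(s)=T_{N(s)+n}$ for $n\ge1$, $x_n(s)=x(T_n(s))$. Let $(\Gamma_x)_{x\in X}$ be inhomogeneous $Y$-semigroups such that for each $s\in J$, $(r,t,x,f)\mapsto\Gamma_x(r\wedge t,r\vee t)f$ is $\mathrm{Bor}(J(s))\otimes\mathrm{Bor}(J(s))\otimes\mathcal X\otimes\mathcal Y$–$\mathcal Y$ measurable, and $(D(x,y))_{x,y\in X}\subseteq\mathcal B(Y)$ contractions ($\|D(x,y)\|\le1$) with $(x,y,f)\mapsto D(x,y)f$ measurable. The inhomogeneous random evolution is defined pathwise for $(s,t)\in\Delta_J$ by $V(s,t)=\Big[\prod_{k=1}^{N_s(t)}\Gamma_{x_{k-1}(s)}(T_{k-1}(s),T_k(s))D(x_{k-1}(s),x_k(s))\Big]\Gamma_{x(t)}(T_{N_s(t)}(s),t)$, where the product is ordered left to right ($\prod_{k=1}^nA_k=A_1\cdots A_n$) and the empty product is $I$. *)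

theory Defs
  imports "HOL-Probability.Probability"
begin

definition time_domain :: "real set \<Rightarrow> bool" where
  "time_domain J \<longleftrightarrow> J = {0..} \<or> (\<exists>Tinf>0. J = {0..Tinf})"

definition Jfrom :: "real set \<Rightarrow> real \<Rightarrow> real set" where
  "Jfrom J s = {t \<in> J. s \<le> t}"

definition inhom_semigroup ::
  "real set \<Rightarrow> (real \<Rightarrow> real \<Rightarrow> ('y::real_normed_vector \<Rightarrow>\<^sub>L 'y)) \<Rightarrow> bool" where
  "inhom_semigroup J G \<longleftrightarrow>
     (\<forall>t\<in>J. G t t = id_blinfun) \<and>
     (\<forall>s\<in>J. \<forall>r\<in>J. \<forall>t\<in>J. s \<le> r \<and> r \<le> t \<longrightarrow> G s r o\<^sub>L G r t = G s t)"

definition renT :: "(nat \<Rightarrow> 'a \<Rightarrow> real) \<Rightarrow> nat \<Rightarrow> 'a \<Rightarrow> real" where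
  "renT tau n \<omega> = (\<Sum>k\<in>{1..n}. tau k \<omega>)"

definition renN :: "(nat \<Rightarrow> 'a \<Rightarrow> real) \<Rightarrow> real \<Rightarrow> 'a \<Rightarrow> nat" where
  "renN tau t \<omega> = Max {n. renT tau n \<omega> \<le> t}"

definition xproc :: "(nat \<Rightarrow> 'a \<Rightarrow> 'x) \<Rightarrow> (nat \<Rightarrow> 'a \<Rightarrow> real) \<Rightarrow> real \<Rightarrow> 'a \<Rightarrow> 'x" where
  "xproc xs tau t \<omega> = xs (renN tau t \<omega>) \<omega>"

definition Ns :: "(nat \<Rightarrow> 'a \<Rightarrow> real) \<Rightarrow> real \<Rightarrow> real \<Rightarrow> 'a \<Rightarrow> nat" where
  "Ns tau s t \<omega> = renN tau t \<omega> - renN tau s \<omega>"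

definition Tk :: "(nat \<Rightarrow> 'a \<Rightarrow> real) \<Rightarrow> real \<Rightarrow> nat \<Rightarrow> 'a \<Rightarrow> real" where
  "Tk tau s n \<omega> = (if n = 0 then s else renT tau (renN tau s \<omega> + n) \<omega>)"

definition xk :: "(nat \<Rightarrow> 'a \<Rightarrow> 'x) \<Rightarrow> (nat \<Rightarrow> 'a \<Rightarrow> real) \<Rightarrow> real \<Rightarrow> nat \<Rightarrow> 'a \<Rightarrow> 'x" where
  "xk xs tau s n \<omega> = xproc xs tau (Tk tau s n \<omega>) \<omega>"

fun lprod :: "(nat \<Rightarrow> ('y::real_normed_vector \<Rightarrow>\<^sub>L 'y)) \<Rightarrow> nat \<Rightarrow> ('y \<Rightarrow>\<^sub>L 'y)" where
  "lprod A 0 = id_blinfun"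
| "lprod A (Suc n) = lprod A n o\<^sub>L A (Suc n)"

definition rand_evol ::
  "('x \<Rightarrow> real \<Rightarrow> real \<Rightarrow> ('y::real_normed_vector \<Rightarrow>\<^sub>L 'y)) \<Rightarrow> ('x \<Rightarrow> 'x \<Rightarrow> ('y \<Rightarrow>\<^sub>L 'y)) \<Rightarrow>
   (nat \<Rightarrow> 'a \<Rightarrow> 'x) \<Rightarrow> (nat \<Rightarrow> 'a \<Rightarrow> real) \<Rightarrow> real \<Rightarrow> real \<Rightarrow> 'a \<Rightarrow> ('y \<Rightarrow>\<^sub>L 'y)" where
  "rand_evol G D xs tau s t \<omega> =
     lprod (\<lambda>k. G (xk xs tau s (k - 1) \<omega>) (Tk tau s (k - 1) \<omega>) (Tk tau s k \<omega>)
                 o\<^sub>L D (xk xs tau s (k - 1) \<omega>) (xk xs tau s k \<omega>))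
           (Ns tau s t \<omega>)
     o\<^sub>L G (xproc xs tau t \<omega>) (Tk tau s (Ns tau s t \<omega>) \<omega>) t"

definition mrp_past :: "'a measure \<Rightarrow> (nat \<Rightarrow> 'a \<Rightarrow> 'x) \<Rightarrow> (nat \<Rightarrow> 'a \<Rightarrow> real) \<Rightarrow> nat \<Rightarrow> 'a measure" where
  "mrp_past M xs tau n = sigma (space M)
     (\<Union>k\<in>{..n}. {xs k -` A \<inter> space M | A. True} \<union>
                 {renT tau k -` B \<inter> space M | B. B \<in> sets borel})"

definition markov_renewal :: "'a measure \<Rightarrow> (nat \<Rightarrow> 'a \<Rightarrow> 'x) \<Rightarrow> (nat \<Rightarrow> 'a \<Rightarrow> real) \<Rightarrow>
    ('x \<Rightarrow> 'x \<Rightarrow> real \<Rightarrow> real) \<Rightarrow> bool" where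
  "markov_renewal M xs tau Q \<longleftrightarrow>
     (\<forall>n y t. AE \<omega> in M.
        real_cond_exp M (mrp_past M xs tau n)
          (indicator {\<omega>' \<in> space M. xs (Suc n) \<omega>' = y \<and> renT tau (Suc n) \<omega>' - renT tau n \<omega>' \<le> t}) \<omega>
        = Q (xs n \<omega>) y t)"

definition aug_filt :: "'a measure \<Rightarrow> (nat \<Rightarrow> 'a \<Rightarrow> 'x) \<Rightarrow> (nat \<Rightarrow> 'a \<Rightarrow> real) \<Rightarrow> real \<Rightarrow> real \<Rightarrow> 'a measure" where
  "aug_filt M xs tau s t = sigma (space M)
     ((\<Union>n. {(\<lambda>\<omega>. xk xs tau s (min n (Ns tau s t \<omega>)) \<omega>) -` A \<inter> space M | A. True}) \<union>
      (\<Union>n. {(\<lambda>\<omega>. Tk tau s (min n (Ns tau s t \<omega>)) \<omega>) -` B \<inter> space M | B. B \<in> sets borel}) \<union>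
      null_sets M)"

end

theory Submission
  imports Defs
begin

text \<open>Pathwise, V(s,t) only involves the stopped sequences x_{n\<and>N}(s) and T_{n\<and>N}(s),
  N = N_s(t), which generate \<open>\<F>\<^sub>t(s)\<close>: it is the N-th member of a sequence of products
  built from them, and each member is a composition of the measurable maps \<Gamma> and D with
  these generators. The index N is itself measurable: since jump times strictly increase,
  N is the first index at which the stopped jump times stop moving. Composing with the
  countably valued N gives the claim.\<close>

lemma renT_0 [simp]: "renT tau 0 \<omega> = 0"
  by (simp add: renT_def)

lemma renT_Suc: "renT tau (Suc n) \<omega> = renT tau n \<omega> + tau (Suc n) \<omega>"
  by (simp add: renT_def sum.cl_ivl_Suc)

locale renewal_path =
  fixes tau :: "nat \<Rightarrow> 'a \<Rightarrow> real" and \<omega> :: 'a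
  assumes tau_pos: "\<And>n. n \<ge> 1 \<Longrightarrow> tau n \<omega> > 0"
    and finite_renT_le_rat: "\<And>r. r \<in> \<rat> \<Longrightarrow> finite {n. renT tau n \<omega> \<le> r}"
begin

lemma renT_less: "i < j \<Longrightarrow> renT tau i \<omega> < renT tau j \<omega>"
  by (rule lift_Suc_mono_less[of "\<lambda>n. renT tau n \<omega>"]) (auto simp: renT_Suc intro: tau_pos)

lemma renT_le_iff: "renT tau i \<omega> \<le> renT tau j \<omega> \<longleftrightarrow> i \<le> j"
  using renT_less[of i j] renT_less[of j i] by (cases i j rule: linorder_cases) auto

lemma renT_nonneg: "renT tau j \<omega> \<ge> 0"
  using renT_le_iff[of 0 j] by simp

lemma finite_renT_le: "finite {n. renT tau n \<omega> \<le> r}"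
proof (rule finite_subset)
  show "{n. renT tau n \<omega> \<le> r} \<subseteq> {n. renT tau n \<omega> \<le> of_int \<lceil>r\<rceil>}"
    using le_of_int_ceiling[of r] by (auto intro: order_trans)
qed (rule finite_renT_le_rat, simp)

lemma renT_le_iff_le_renN:
  assumes "0 \<le> r"
  shows "renT tau j \<omega> \<le> r \<longleftrightarrow> j \<le> renN tau r \<omega>"
proof
  assume "renT tau j \<omega> \<le> r"
  then show "j \<le> renN tau r \<omega>"
    unfolding renN_def by (intro Max_ge finite_renT_le) simp
next
  have "renN tau r \<omega> \<in> {n. renT tau n \<omega> \<le> r}"
    unfolding renN_def using finite_renT_le assms by (intro Max_in) (auto intro: exI[of _ 0])
  moreover assume "j \<le> renN tau r \<omega>"
  ultimately show "renT tau j \<omega> \<le> r"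
    using renT_le_iff[of j "renN tau r \<omega>"] by simp
qed

lemma less_renT_Suc_renN: "0 \<le> r \<Longrightarrow> r < renT tau (Suc (renN tau r \<omega>)) \<omega>"
  using renT_le_iff_le_renN[of r "Suc (renN tau r \<omega>)"] by simp

lemma renN_mono: "0 \<le> r \<Longrightarrow> r \<le> r' \<Longrightarrow> renN tau r \<omega> \<le> renN tau r' \<omega>"
  using renT_le_iff_le_renN[of r "renN tau r \<omega>"] renT_le_iff_le_renN[of r' "renN tau r \<omega>"]
  by simp

lemma renN_renT [simp]: "renN tau (renT tau j \<omega>) \<omega> = j"
  using renT_le_iff_le_renN[OF renT_nonneg[of j], of j]
    renT_le_iff_le_renN[OF renT_nonneg[of j], of "Suc j"] renT_le_iff[of "Suc j" j]
  by simp

lemma Tk_less: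
  assumes "0 \<le> s" and "0 < j"
  shows "Tk tau s (j - 1) \<omega> < Tk tau s j \<omega>"
proof (cases "j = 1")
  case True
  then show ?thesis using less_renT_Suc_renN[OF assms(1)] by (simp add: Tk_def)
next
  case False
  then show ?thesis using assms(2) renT_less by (simp add: Tk_def)
qed

lemma mono_Tk: "0 \<le> s \<Longrightarrow> mono (\<lambda>j. Tk tau s j \<omega>)"
  using Tk_less[of s "Suc _"] by (intro mono_iff_le_Suc[THEN iffD2]) (simp add: less_imp_le)

context
  fixes s t :: real
  assumes s_nonneg: "0 \<le> s" and s_le_t: "s \<le> t"
begin

lemma renN_eq_renN_add_Ns: "renN tau t \<omega> = renN tau s \<omega> + Ns tau s t \<omega>"
  using renN_mono[OF s_nonneg s_le_t] by (simp add: Ns_def)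

lemma Tk_bounds:
  assumes "j \<le> Ns tau s t \<omega>"
  shows "s \<le> Tk tau s j \<omega> \<and> Tk tau s j \<omega> \<le> t"
proof (cases "j = 0")
  case True
  then show ?thesis using s_le_t by (simp add: Tk_def)
next
  case False
  have "s \<le> Tk tau s j \<omega>"
    using mono_Tk[OF s_nonneg] monoD[of "\<lambda>j. Tk tau s j \<omega>" 0 j] by (simp add: Tk_def[of _ _ 0])
  moreover have "renT tau (renN tau s \<omega> + j) \<omega> \<le> t"
    using renT_le_iff_le_renN[of t] s_nonneg s_le_t assms renN_eq_renN_add_Ns by simp
  ultimately show ?thesis using False by (simp add: Tk_def)
qed

lemma xproc_eq_xk_Ns: "xproc xs tau t \<omega> = xk xs tau s (Ns tau s t \<omega>) \<omega>"
  using renN_eq_renN_add_Ns by (simp add: xk_def xproc_def Tk_def)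

end

end

lemma lprod_cong: "(\<And>k. 1 \<le> k \<Longrightarrow> k \<le> n \<Longrightarrow> A k = B k) \<Longrightarrow> lprod A n = lprod B n"
  by (induction n) auto

lemma borel_measurable_lprod_apply:
  assumes "\<And>k h. h \<in> borel_measurable F \<Longrightarrow> (\<lambda>\<omega>. blinfun_apply (A \<omega> k) (h \<omega>)) \<in> borel_measurable F"
    and "g \<in> borel_measurable F"
  shows "(\<lambda>\<omega>. blinfun_apply (lprod (A \<omega>) n) (g \<omega>)) \<in> borel_measurable F"
  using assms(2) by (induction n arbitrary: g) (auto intro: assms(1))

text \<open>V(s,t) along a fixed path: states \<open>x\<close>, jump times \<open>T\<close> (with \<open>T 0 = s\<close>) and \<open>m\<close> jumps
  before \<open>t\<close>.\<close>

definition evol_path ::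
  "('x \<Rightarrow> real \<Rightarrow> real \<Rightarrow> ('y::real_normed_vector \<Rightarrow>\<^sub>L 'y)) \<Rightarrow> ('x \<Rightarrow> 'x \<Rightarrow> ('y \<Rightarrow>\<^sub>L 'y)) \<Rightarrow>
   (nat \<Rightarrow> 'x) \<Rightarrow> (nat \<Rightarrow> real) \<Rightarrow> real \<Rightarrow> nat \<Rightarrow> ('y \<Rightarrow>\<^sub>L 'y)" where
  "evol_path G D x T t m =
     lprod (\<lambda>k. G (x (k - 1)) (T (k - 1)) (T k) o\<^sub>L D (x (k - 1)) (x k)) m o\<^sub>L G (x m) (T m) t"

lemma evol_path_cong:
  assumes "\<And>k. k \<le> m \<Longrightarrow> x k = x' k \<and> T k = T' k"
  shows "evol_path G D x T t m = evol_path G D x' T' t m"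
proof -
  have "lprod (\<lambda>k. G (x (k - 1)) (T (k - 1)) (T k) o\<^sub>L D (x (k - 1)) (x k)) m =
        lprod (\<lambda>k. G (x' (k - 1)) (T' (k - 1)) (T' k) o\<^sub>L D (x' (k - 1)) (x' k)) m"
    using assms by (intro lprod_cong) simp
  then show ?thesis using assms[of m] by (simp add: evol_path_def)
qed

lemma borel_measurable_ordered_apply:
  assumes G: "(\<lambda>(r, r', x, g). blinfun_apply (G x (min r r') (max r r')) g)
      \<in> measurable (restrict_space borel S \<Otimes>\<^sub>M
                    (restrict_space borel S \<Otimes>\<^sub>M (count_space UNIV \<Otimes>\<^sub>M borel))) borel"
    and x: "x \<in> measurable F (count_space UNIV)"
    and r: "r \<in> borel_measurable F" and r': "r' \<in> borel_measurable F"
    and h: "h \<in> borel_measurable F"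
    and range: "\<And>\<omega>. \<omega> \<in> space F \<Longrightarrow> r \<omega> \<in> S \<and> r' \<omega> \<in> S \<and> r \<omega> \<le> r' \<omega>"
  shows "(\<lambda>\<omega>. blinfun_apply (G (x \<omega>) (r \<omega>) (r' \<omega>)) (h \<omega>)) \<in> borel_measurable F"
proof -
  have "(\<lambda>\<omega>. (r \<omega>, r' \<omega>, x \<omega>, h \<omega>)) \<in> measurable F
      (restrict_space borel S \<Otimes>\<^sub>M (restrict_space borel S \<Otimes>\<^sub>M (count_space UNIV \<Otimes>\<^sub>M borel)))"
    using x r r' h range by (intro measurable_Pair measurable_restrict_space2) auto
  from measurable_compose[OF this G]
  have "(\<lambda>\<omega>. blinfun_apply (G (x \<omega>) (min (r \<omega>) (r' \<omega>)) (max (r \<omega>) (r' \<omega>))) (h \<omega>))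
      \<in> borel_measurable F"
    by simp
  then show ?thesis
    by (rule measurable_cong[THEN iffD1, rotated]) (simp add: range min_absorb1 max_absorb2)
qed

lemma borel_measurable_evol_path_apply:
  assumes G: "(\<lambda>(r, r', x, g). blinfun_apply (G x (min r r') (max r r')) g)
      \<in> measurable (restrict_space borel S \<Otimes>\<^sub>M
                    (restrict_space borel S \<Otimes>\<^sub>M (count_space UNIV \<Otimes>\<^sub>M borel))) borel"
    and D: "(\<lambda>(x, y, g). blinfun_apply (D x y) g)
      \<in> measurable (count_space UNIV \<Otimes>\<^sub>M (count_space UNIV \<Otimes>\<^sub>M borel)) borel"
    and X: "\<And>n. X n \<in> measurable F (count_space UNIV)"
    and T: "\<And>n. T n \<in> borel_measurable F"
    and T_range: "\<And>n \<omega>. \<omega> \<in> space F \<Longrightarrow> T n \<omega> \<in> S \<and> T n \<omega> \<le> t"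
    and T_mono: "\<And>\<omega>. \<omega> \<in> space F \<Longrightarrow> mono (\<lambda>n. T n \<omega>)"
    and "t \<in> S"
  shows "(\<lambda>\<omega>. blinfun_apply (evol_path G D (\<lambda>n. X n \<omega>) (\<lambda>n. T n \<omega>) t m) f)
      \<in> borel_measurable F"
  unfolding evol_path_def blinfun_apply_blinfun_compose
proof (rule borel_measurable_lprod_apply)
  fix k and h :: "_ \<Rightarrow> 'b" assume h: "h \<in> borel_measurable F"
  have "(\<lambda>\<omega>. blinfun_apply (D (X (k - 1) \<omega>) (X k \<omega>)) (h \<omega>)) \<in> borel_measurable F"
    using measurable_compose[OF measurable_Pair[OF X measurable_Pair[OF X h]] D] by simp
  with T_range T_mono show "(\<lambda>\<omega>. blinfun_apply (G (X (k - 1) \<omega>) (T (k - 1) \<omega>) (T k \<omega>)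
      o\<^sub>L D (X (k - 1) \<omega>) (X k \<omega>)) (h \<omega>)) \<in> borel_measurable F"
    unfolding blinfun_apply_blinfun_compose
    by (intro borel_measurable_ordered_apply[OF G X T T]) (auto simp: mono_def)
next
  show "(\<lambda>\<omega>. blinfun_apply (G (X m \<omega>) (T m \<omega>) t) f) \<in> borel_measurable F"
    using T_range \<open>t \<in> S\<close> by (intro borel_measurable_ordered_apply[OF G X T]) auto
qed

lemma stop_index_eq_iff:
  assumes "\<And>j. 0 < j \<Longrightarrow> j \<le> N \<Longrightarrow> a (j - 1) \<noteq> a j"
  shows "N = m \<longleftrightarrow>
    (m = 0 \<or> a (min m N) \<noteq> a (min (m - 1) N)) \<and> a (min (Suc m) N) = a (min m N)"
proof (cases N m rule: linorder_cases)
  case less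
  then have "min (Suc m) N = N" "min m N = N" "min (m - 1) N = N" by auto
  then show ?thesis using less by simp
next
  case equal
  then show ?thesis using assms[of m] by (cases m) (auto simp: min_def)
next
  case greater
  then show ?thesis using assms[of "Suc m"] by (simp add: min_def)
qed

lemma measurable_stop_index:
  fixes a :: "nat \<Rightarrow> 'a \<Rightarrow> real" and N :: "'a \<Rightarrow> nat"
  assumes a: "\<And>n. (\<lambda>\<omega>. a (min n (N \<omega>)) \<omega>) \<in> borel_measurable F"
    and moves: "\<And>\<omega> j. \<omega> \<in> space F \<Longrightarrow> 0 < j \<Longrightarrow> j \<le> N \<omega> \<Longrightarrow> a (j - 1) \<omega> \<noteq> a j \<omega>"
  shows "N \<in> measurable F (count_space UNIV)"
  unfolding measurable_count_space_eq2_countable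
proof (intro conjI ballI)
  fix m :: nat
  have "N -` {m} \<inter> space F = {\<omega> \<in> space F.
      (m = 0 \<or> a (min m (N \<omega>)) \<omega> \<noteq> a (min (m - 1) (N \<omega>)) \<omega>) \<and>
      a (min (Suc m) (N \<omega>)) \<omega> = a (min m (N \<omega>)) \<omega>}"
  proof (rule set_eqI)
    fix \<omega>
    show "\<omega> \<in> N -` {m} \<inter> space F \<longleftrightarrow> \<omega> \<in> {\<omega> \<in> space F.
        (m = 0 \<or> a (min m (N \<omega>)) \<omega> \<noteq> a (min (m - 1) (N \<omega>)) \<omega>) \<and>
        a (min (Suc m) (N \<omega>)) \<omega> = a (min m (N \<omega>)) \<omega>}"
      using stop_index_eq_iff[of "N \<omega>" "\<lambda>j. a j \<omega>" m] moves[of \<omega>] by auto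
  qed
  also have "\<dots> \<in> sets F"
    using a by measurable
  finally show "N -` {m} \<inter> space F \<in> sets F" .
qed simp

definition stopped_xk :: "(nat \<Rightarrow> 'a \<Rightarrow> 'x) \<Rightarrow> (nat \<Rightarrow> 'a \<Rightarrow> real) \<Rightarrow> real \<Rightarrow> real \<Rightarrow> nat \<Rightarrow> 'a \<Rightarrow> 'x"
  where "stopped_xk xs tau s t n \<omega> = xk xs tau s (min n (Ns tau s t \<omega>)) \<omega>"

definition stopped_Tk :: "(nat \<Rightarrow> 'a \<Rightarrow> real) \<Rightarrow> real \<Rightarrow> real \<Rightarrow> nat \<Rightarrow> 'a \<Rightarrow> real"
  where "stopped_Tk tau s t n \<omega> = Tk tau s (min n (Ns tau s t \<omega>)) \<omega>"

lemma
  shows space_aug_filt: "space (aug_filt M xs tau s t) = space M"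
    and measurable_stopped_xk: "stopped_xk xs tau s t n \<in> measurable (aug_filt M xs tau s t) (count_space UNIV)"
    and borel_measurable_stopped_Tk: "stopped_Tk tau s t n \<in> borel_measurable (aug_filt M xs tau s t)"
proof -
  let ?gen = "(\<Union>n. {stopped_xk xs tau s t n -` A \<inter> space M | A. True}) \<union>
      (\<Union>n. {stopped_Tk tau s t n -` B \<inter> space M | B. B \<in> sets borel}) \<union> null_sets M"
  have gen: "?gen \<subseteq> Pow (space M)"
    using sets.sets_into_space[of _ M] by (auto dest: null_setsD2)
  have aug: "aug_filt M xs tau s t = sigma (space M) ?gen"
    by (simp add: aug_filt_def stopped_xk_def[abs_def] stopped_Tk_def[abs_def])
  show space: "space (aug_filt M xs tau s t) = space M"
    unfolding aug by (rule space_measure_of_conv)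
  have sets: "sets (aug_filt M xs tau s t) = sigma_sets (space M) ?gen"
    unfolding aug by (rule sets_measure_of[OF gen])
  show "stopped_xk xs tau s t n \<in> measurable (aug_filt M xs tau s t) (count_space UNIV)"
    by (rule measurableI) (auto simp: space sets)
  show "stopped_Tk tau s t n \<in> borel_measurable (aug_filt M xs tau s t)"
    by (rule measurableI) (auto simp: space sets)
qed

context renewal_path
begin

context
  fixes s t :: real
  assumes s_nonneg: "0 \<le> s" and s_le_t: "s \<le> t"
begin

lemma stopped_Tk_bounds: "s \<le> stopped_Tk tau s t n \<omega> \<and> stopped_Tk tau s t n \<omega> \<le> t"
  unfolding stopped_Tk_def by (rule Tk_bounds[OF s_nonneg s_le_t]) simp

lemma mono_stopped_Tk: "mono (\<lambda>n. stopped_Tk tau s t n \<omega>)"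
  using mono_Tk[OF s_nonneg] unfolding stopped_Tk_def mono_def by (simp add: min.coboundedI1)

lemma rand_evol_eq_evol_path_stopped:
  "rand_evol G D xs tau s t \<omega> =
     evol_path G D (\<lambda>n. stopped_xk xs tau s t n \<omega>) (\<lambda>n. stopped_Tk tau s t n \<omega>) t (Ns tau s t \<omega>)"
proof -
  have "rand_evol G D xs tau s t \<omega> =
      evol_path G D (\<lambda>n. xk xs tau s n \<omega>) (\<lambda>n. Tk tau s n \<omega>) t (Ns tau s t \<omega>)"
    unfolding rand_evol_def evol_path_def xproc_eq_xk_Ns[OF s_nonneg s_le_t] ..
  also have "\<dots> = evol_path G D (\<lambda>n. stopped_xk xs tau s t n \<omega>) (\<lambda>n. stopped_Tk tau s t n \<omega>)
      t (Ns tau s t \<omega>)"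
    by (rule evol_path_cong) (simp add: stopped_xk_def stopped_Tk_def)
  finally show ?thesis .
qed

end

end

lemma measurable_Ns_aug_filt:
  assumes path: "\<And>\<omega>. \<omega> \<in> space M \<Longrightarrow> renewal_path tau \<omega>" and "0 \<le> s"
  shows "Ns tau s t \<in> measurable (aug_filt M xs tau s t) (count_space UNIV)"
proof (rule measurable_stop_index[where a = "\<lambda>n \<omega>. Tk tau s n \<omega>"])
  show "(\<lambda>\<omega>. Tk tau s (min n (Ns tau s t \<omega>)) \<omega>) \<in> borel_measurable (aug_filt M xs tau s t)" for n
    using borel_measurable_stopped_Tk[of tau s t n M xs] by (simp add: stopped_Tk_def[abs_def])
  show "Tk tau s (j - 1) \<omega> \<noteq> Tk tau s j \<omega>"
    if "\<omega> \<in> space (aug_filt M xs tau s t)" "0 < j" for \<omega> j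
    using renewal_path.Tk_less[OF path[OF that(1)[unfolded space_aug_filt]] \<open>0 \<le> s\<close> that(2)]
    by simp
qed

theorem proposition3p2:
  fixes M :: "'a measure"
    and J :: "real set"
    and xs :: "nat \<Rightarrow> 'a \<Rightarrow> 'x::finite"
    and tau :: "nat \<Rightarrow> 'a \<Rightarrow> real"
    and Q :: "'x \<Rightarrow> 'x \<Rightarrow> real \<Rightarrow> real"
    and G :: "'x \<Rightarrow> real \<Rightarrow> real \<Rightarrow> ('y::{banach, second_countable_topology} \<Rightarrow>\<^sub>L 'y)"
    and D :: "'x \<Rightarrow> 'x \<Rightarrow> ('y \<Rightarrow>\<^sub>L 'y)"
    and s t :: real and f :: 'y
  assumes "time_domain J"
    and "prob_space M" and "complete_measure M"
    and "\<And>n. xs n \<in> measurable M (count_space UNIV)"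
    and "\<And>n. tau n \<in> borel_measurable M"
    and "\<And>n \<omega>. n \<ge> 1 \<Longrightarrow> \<omega> \<in> space M \<Longrightarrow> tau n \<omega> > 0"
    and "markov_renewal M xs tau Q"
    and "\<And>\<omega> r. \<omega> \<in> space M \<Longrightarrow> r \<in> \<rat> \<Longrightarrow> finite {n. renT tau n \<omega> \<le> r}"
    and "\<And>x. inhom_semigroup J (G x)"
    and "\<And>u. u \<in> J \<Longrightarrow>
           (\<lambda>(r, t', x, g). blinfun_apply (G x (min r t') (max r t')) g)
             \<in> measurable (restrict_space borel (Jfrom J u) \<Otimes>\<^sub>M
                           (restrict_space borel (Jfrom J u) \<Otimes>\<^sub>M
                            (count_space UNIV \<Otimes>\<^sub>M borel))) borel"
    and "\<And>x y. norm (D x y) \<le> 1"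
    and "(\<lambda>(x, y, g). blinfun_apply (D x y) g)
           \<in> measurable (count_space UNIV \<Otimes>\<^sub>M (count_space UNIV \<Otimes>\<^sub>M borel)) borel"
    and "s \<in> J" and "t \<in> Jfrom J s"
  shows "(\<lambda>\<omega>. blinfun_apply (rand_evol G D xs tau s t \<omega>) f) \<in> borel_measurable (aug_filt M xs tau s t)"
proof -
  let ?F = "aug_filt M xs tau s t"
  have s_nonneg: "0 \<le> s" and s_le_t: "s \<le> t" and t_in: "t \<in> Jfrom J s"
    using assms(1,13,14) by (auto simp: time_domain_def Jfrom_def)
  have path: "renewal_path tau \<omega>" if "\<omega> \<in> space M" for \<omega>
    using assms(6,8) that by (simp add: renewal_path_def)
  have interval: "r \<in> Jfrom J s" if "s \<le> r" "r \<le> t" for r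
    using assms(1) t_in s_nonneg that by (auto simp: time_domain_def Jfrom_def)
  have Ns: "Ns tau s t \<in> measurable ?F (count_space UNIV)"
    using path s_nonneg by (rule measurable_Ns_aug_filt)
  have "(\<lambda>\<omega>. blinfun_apply (evol_path G D (\<lambda>n. stopped_xk xs tau s t n \<omega>)
      (\<lambda>n. stopped_Tk tau s t n \<omega>) t m) f) \<in> borel_measurable ?F" for m
    using renewal_path.stopped_Tk_bounds[OF path s_nonneg s_le_t]
      renewal_path.mono_stopped_Tk[OF path s_nonneg s_le_t]
    by (intro borel_measurable_evol_path_apply[OF assms(10)[OF assms(13)] assms(12)]
        measurable_stopped_xk borel_measurable_stopped_Tk t_in) (auto intro: interval simp: space_aug_filt)
  from measurable_compose_countable[OF this Ns]
  show ?thesis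
    by (rule measurable_cong[THEN iffD1, rotated])
      (simp add: renewal_path.rand_evol_eq_evol_path_stopped[OF path s_nonneg s_le_t] space_aug_filt)
qed

end
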